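(* Let $\mathfrak{R}$ be a read set with maximal read length $L$. Then every string of length $2L$ and every non-contained read of $\mathfrak{R}$ is a conductor for $\mathrm{CC}(\mathfrak{R})$.
   Context: All strings are over a fixed finite alphabet $\Sigma$ (in the paper's convention this is the alphabet of $k$-mers, so overlaps of length at least $1$ correspond to overlaps of at least $k$ nucleotides). A cyclic string is a bi-infinite periodic word $\mathbb{Z}\to\Sigma$ up to shift; for a nonempty finite $x$, $\langle x\rangle$ is the cyclic string repeating $x$ in both directions. A read set $\mathfrak{R}$ is a finite set of nonempty finite strings (reads); a read is non-contained if it is not a substring of any other read of $\mathfrak{R}$. A read chain is a sequence of reads $r_1,\dots,r_n$ (repetitions allowed) together with integers $t_1,\dots,t_{n-1}$ with $1\le t_i\le\min(|r_i|,|r_{i+1}|)$ such that the length-$t_i$ suffix of $r_i$ equals the length-$t_i$ prefix of $r_{i+1}$; its merged string is $r_1$ followed, for $i=1,\dots,n-1$, by $r_{i+1}$ with its first $t_i$ characters removed. A chain is cyclic if $n\ge 2$ and $r_1=r_n$; then its merged string has the form $r_1x$, and if $x$ is nonempty the label of the cyclic chain is $\langle x\rangle$. $\mathrm{CC}(\mathfrak{R})$ is the set of labels of cyclic read chains. A finite string $v$ is a conductor for a set $\mathfrak{C}$ of cyclic strings if for all nonempty finite strings $a,b$ such that $va$ and $vb$ both end with $v$, we have $\langle ab\rangle\in\mathfrak{C}$ if and only if $\langle a\rangle\in\mathfrak{C}$ and $\langle b\rangle\in\mathfrak{C}$. *)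

theory Defs
  imports Main "HOL-Library.Sublist"
begin

text \<open>Cyclic strings: a bi-infinite periodic word, taken up to shift, is represented
by its shift-equivalence class (a set of functions int to the alphabet).\<close>

definition cyc :: "'a list \<Rightarrow> (int \<Rightarrow> 'a) set" where
  "cyc x = {f. \<exists>s::int. \<forall>i. f i = x ! nat ((i + s) mod int (length x))}"

definition read_chain :: "'a list set \<Rightarrow> 'a list list \<Rightarrow> nat list \<Rightarrow> bool" where
  "read_chain R rs ts \<longleftrightarrow> rs \<noteq> [] \<and> set rs \<subseteq> R \<and> length ts = length rs - 1 \<and>
     (\<forall>i < length ts. 1 \<le> ts ! i \<and> ts ! i \<le> min (length (rs ! i)) (length (rs ! Suc i)) \<and>
        drop (length (rs ! i) - ts ! i) (rs ! i) = take (ts ! i) (rs ! Suc i))"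

definition merged :: "'a list list \<Rightarrow> nat list \<Rightarrow> 'a list" where
  "merged rs ts = hd rs @ concat (map (\<lambda>i. drop (ts ! i) (rs ! Suc i)) [0..<length ts])"

definition cyclic_chain :: "'a list set \<Rightarrow> 'a list list \<Rightarrow> nat list \<Rightarrow> bool" where
  "cyclic_chain R rs ts \<longleftrightarrow> read_chain R rs ts \<and> length rs \<ge> 2 \<and> hd rs = last rs"

text \<open>Label: merged string is r1 x; label is the cyclic string of x (x nonempty).\<close>

definition CC :: "'a list set \<Rightarrow> (int \<Rightarrow> 'a) set set" where
  "CC R = {cyc (drop (length (hd rs)) (merged rs ts)) | rs ts.
             cyclic_chain R rs ts \<and> drop (length (hd rs)) (merged rs ts) \<noteq> []}"

definition conductor :: "'a list \<Rightarrow> (int \<Rightarrow> 'a) set set \<Rightarrow> bool" where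
  "conductor v C \<longleftrightarrow> (\<forall>a b. a \<noteq> [] \<longrightarrow> b \<noteq> [] \<longrightarrow> suffix v (v @ a) \<longrightarrow> suffix v (v @ b) \<longrightarrow>
      (cyc (a @ b) \<in> C \<longleftrightarrow> cyc a \<in> C \<and> cyc b \<in> C))"

definition read_set :: "'a list set \<Rightarrow> bool" where
  "read_set R \<longleftrightarrow> finite R \<and> (\<forall>r\<in>R. r \<noteq> [])"

definition non_contained :: "'a list set \<Rightarrow> 'a list \<Rightarrow> bool" where
  "non_contained R r \<longleftrightarrow> r \<in> R \<and> (\<forall>r'\<in>R. r' \<noteq> r \<longrightarrow> \<not> sublist r r')"

end

theory Submission
  imports Defs
begin

(* A closed walk in the overlap graph of R spells the label of a cyclic read chain. Call an
   occurrence of a read r at offset p of v an anchor of v if, wherever v occurs, no longer read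
   occurrence covers that copy of r. A walk through such a maximal occurrence can be cut there:
   the parts before and after it are again walks. If v a and v b end with v (so |a| and |b| are
   periods of v), then v a and v b occur in powers of a b, and of a and b respectively; cutting
   the closed walks spelling these powers at the anchors in two overlapping copies of v gives
   closed walks at r labelled by rotations of a and of b, and conversely these two closed walks
   concatenate to one labelled by a rotation of a b. A non-contained read is its own anchor.
   If |v| = 2L, the longest read occurrence in v covering position L is an anchor, because every
   read covering that position lies inside v. *)

section \<open>Walks in the overlap graph\<close>

inductive walk :: "'a list set \<Rightarrow> 'a list \<Rightarrow> 'a list \<Rightarrow> 'a list \<Rightarrow> bool" for R where
  walk_single: "r \<in> R \<Longrightarrow> walk R r r r"
| walk_extend: "walk R r0 s r1 \<Longrightarrow> r2 \<in> R \<Longrightarrow> 1 \<le> t \<Longrightarrow> t \<le> length r1 \<Longrightarrow> t \<le> length r2 \<Longrightarrow>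
     drop (length r1 - t) r1 = take t r2 \<Longrightarrow> walk R r0 (s @ drop t r2) r2"

lemma walk_ends: "walk R r0 s r1 \<Longrightarrow> r0 \<in> R \<and> r1 \<in> R \<and> prefix r0 s \<and> suffix r1 s"
proof (induction rule: walk.induct)
  case (walk_extend r0 s r1 r2 t)
  have "r2 = drop (length r1 - t) r1 @ drop t r2"
    using walk_extend.hyps(6) by (metis append_take_drop_id)
  moreover have "suffix (drop (length r1 - t) r1) s"
    using walk_extend.IH suffix_drop suffix_order.order_trans by blast
  ultimately have "suffix r2 (s @ drop t r2)"
    by (metis append.assoc suffix_def)
  then show ?case using walk_extend by (auto intro: prefix_prefix)
qed auto

lemma read_chain_snoc:
  assumes "rs \<noteq> []" and "length ts = length rs - 1"
  shows "read_chain R (rs @ [x]) (ts @ [t]) \<longleftrightarrow> read_chain R rs ts \<and> x \<in> R \<and> 1 \<le> t \<and>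
     t \<le> min (length (last rs)) (length x) \<and> drop (length (last rs) - t) (last rs) = take t x"
proof -
  obtain n where n: "length rs = Suc n" "length ts = n" using assms by (cases rs) auto
  define overlap where "overlap = (\<lambda>(ts::nat list) (rs::'a list list) i. 1 \<le> ts ! i \<and>
     ts ! i \<le> min (length (rs ! i)) (length (rs ! Suc i)) \<and>
     drop (length (rs ! i) - ts ! i) (rs ! i) = take (ts ! i) (rs ! Suc i))"
  have chain: "read_chain R rs' ts' \<longleftrightarrow> rs' \<noteq> [] \<and> set rs' \<subseteq> R \<and> length ts' = length rs' - 1 \<and>
      (\<forall>i<length ts'. overlap ts' rs' i)" for rs' ts'
    unfolding read_chain_def overlap_def by simp
  have old: "(\<forall>i<n. overlap (ts @ [t]) (rs @ [x]) i) \<longleftrightarrow> (\<forall>i<n. overlap ts rs i)"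
    using n by (auto simp: nth_append overlap_def)
  have new: "overlap (ts @ [t]) (rs @ [x]) n \<longleftrightarrow> 1 \<le> t \<and>
     t \<le> min (length (last rs)) (length x) \<and> drop (length (last rs) - t) (last rs) = take t x"
    using n assms by (auto simp: nth_append last_conv_nth overlap_def)
  show ?thesis
    unfolding chain[of "rs @ [x]"] chain[of rs] n(2) length_append_singleton All_less_Suc old new
    using n by auto
qed

lemma merged_snoc:
  assumes "rs \<noteq> []" and "length ts = length rs - 1"
  shows "merged (rs @ [x]) (ts @ [t]) = merged rs ts @ drop t x"
proof -
  obtain n where n: "length rs = Suc n" "length ts = n" using assms by (cases rs) auto
  have "concat (map (\<lambda>i. drop ((ts @ [t]) ! i) ((rs @ [x]) ! Suc i)) [0..<n])
      = concat (map (\<lambda>i. drop (ts ! i) (rs ! Suc i)) [0..<n])"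
    using n by (intro arg_cong[where f=concat] map_cong) (auto simp: nth_append)
  then show ?thesis using assms n unfolding merged_def by (simp add: nth_append)
qed

lemma walk_if_read_chain: "read_chain R rs ts \<Longrightarrow> walk R (hd rs) (merged rs ts) (last rs)"
proof (induction rs arbitrary: ts rule: rev_induct)
  case (snoc x rs)
  show ?case
  proof (cases "rs = []")
    case True
    then show ?thesis using snoc.prems by (simp add: read_chain_def merged_def walk_single)
  next
    case False
    then obtain ts' t where ts: "ts = ts' @ [t]" and len: "length ts' = length rs - 1"
      using snoc.prems unfolding read_chain_def by (metis length_0_conv rev_exhaust length_append_singleton
          diff_Suc_1 length_greater_0_conv)
    note chain = snoc.prems[unfolded ts read_chain_snoc[OF False len]]
    then have "walk R (hd rs) (merged rs ts' @ drop t x) x"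
      using snoc.IH by (intro walk_extend) auto
    then show ?thesis using ts False merged_snoc[OF False len] by simp
  qed
qed (simp add: read_chain_def)

lemma read_chain_if_walk:
  "walk R r0 s r1 \<Longrightarrow> \<exists>rs ts. read_chain R rs ts \<and> hd rs = r0 \<and> last rs = r1 \<and> merged rs ts = s"
proof (induction rule: walk.induct)
  case (walk_single r)
  then show ?case by (intro exI[of _ "[r]"] exI[of _ "[]"]) (simp add: read_chain_def merged_def)
next
  case (walk_extend r0 s r1 r2 t)
  then obtain rs ts where chain: "read_chain R rs ts" "hd rs = r0" "last rs = r1" "merged rs ts = s"
    by blast
  then have "rs \<noteq> []" and "length ts = length rs - 1" by (auto simp: read_chain_def)
  then show ?case using chain walk_extend
    by (intro exI[of _ "rs @ [r2]"] exI[of _ "ts @ [t]"]) (simp add: read_chain_snoc merged_snoc)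
qed

lemma CC_eq_closed_walks: "CC R = {cyc z |r z. z \<noteq> [] \<and> walk R r (r @ z) r}"
proof (intro equalityI subsetI)
  fix c assume "c \<in> CC R"
  then obtain rs ts where c: "c = cyc (drop (length (hd rs)) (merged rs ts))"
    and chain: "cyclic_chain R rs ts" and ne: "drop (length (hd rs)) (merged rs ts) \<noteq> []"
    unfolding CC_def by blast
  have w: "walk R (hd rs) (merged rs ts) (hd rs)"
    using walk_if_read_chain chain unfolding cyclic_chain_def by fastforce
  then obtain z where "merged rs ts = hd rs @ z" using walk_ends prefix_def by metis
  then show "c \<in> {cyc z |r z. z \<noteq> [] \<and> walk R r (r @ z) r}" using c ne w by auto
next
  fix c assume "c \<in> {cyc z |r z. z \<noteq> [] \<and> walk R r (r @ z) r}"
  then obtain r z where c: "c = cyc z" and z: "z \<noteq> []" and w: "walk R r (r @ z) r" by blast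
  obtain rs ts where chain: "read_chain R rs ts" "hd rs = r" "last rs = r" "merged rs ts = r @ z"
    using read_chain_if_walk[OF w] by blast
  have "length rs \<noteq> 1"
  proof
    assume "length rs = 1"
    then have "merged rs ts = r" using chain by (auto simp: read_chain_def merged_def)
    then show False using chain z by simp
  qed
  moreover have "rs \<noteq> []" using chain by (simp add: read_chain_def)
  ultimately have "cyclic_chain R rs ts" using chain unfolding cyclic_chain_def
    by (metis One_nat_def Suc_1 Suc_leI length_greater_0_conv nat_less_le)
  then show "c \<in> CC R" unfolding CC_def using c z chain by force
qed

lemma walk_append:
  assumes "walk R r1 (r1 @ w) r2" and "walk R r0 s r1"
  shows "walk R r0 (s @ w) r2"
proof -
  have "walk R r0 (s @ w) r2" if "walk R r1 s' r2" and "s' = r1 @ w" and "walk R r0 s r1" for r1 s' w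
    using that
  proof (induction arbitrary: w rule: walk.induct)
    case (walk_extend r1 s' r1' r2 t)
    obtain w1 where w1: "s' = r1 @ w1" using walk_ends[OF walk_extend.hyps(1)] by (auto simp: prefix_def)
    then have "walk R r0 (s @ w1 @ drop t r2) r2"
      using walk_extend walk.walk_extend by (metis append.assoc)
    then show ?case using walk_extend.prems w1 by simp
  qed simp
  then show ?thesis using assms by blast
qed

lemma walk_power: "walk R r (r @ z) r \<Longrightarrow> walk R r (r @ concat (replicate M z)) r"
proof (induction M)
  case 0
  then show ?case using walk_ends by (fastforce intro: walk_single)
next
  case (Suc M)
  then show ?case using walk_append[OF Suc.IH[OF Suc.prems] Suc.prems] by simp
qed

section \<open>Read occurrences and maximal reads\<close>

definition occurs_at :: "'a list \<Rightarrow> nat \<Rightarrow> 'a list \<Rightarrow> bool" where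
  "occurs_at r q T \<longleftrightarrow> q + length r \<le> length T \<and> take (length r) (drop q T) = r"

definition maximal_at :: "'a list set \<Rightarrow> 'a list \<Rightarrow> nat \<Rightarrow> 'a list \<Rightarrow> bool" where
  "maximal_at R r q T \<longleftrightarrow> (\<forall>r'\<in>R. \<forall>q'. q' \<le> q \<longrightarrow> q + length r \<le> q' + length r' \<longrightarrow>
     occurs_at r' q' T \<longrightarrow> length r' \<le> length r)"

lemma occurs_at_nth: "occurs_at r q T \<longleftrightarrow> q + length r \<le> length T \<and> (\<forall>i<length r. T ! (q + i) = r ! i)"
  unfolding occurs_at_def by (auto simp: list_eq_iff_nth_eq)

lemma occurs_at_append: "occurs_at r q s \<Longrightarrow> occurs_at r q (s @ x)"
  by (auto simp: occurs_at_def)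

lemma occurs_at_appendD: "occurs_at r q (s @ x) \<Longrightarrow> q + length r \<le> length s \<Longrightarrow> occurs_at r q s"
  by (auto simp: occurs_at_def)

lemma occurs_at_prefix: "occurs_at r q s \<Longrightarrow> prefix s T \<Longrightarrow> occurs_at r q T"
  by (auto simp: prefix_def occurs_at_append)

lemma occurs_at_suffix: "suffix r s \<Longrightarrow> occurs_at r (length s - length r) s"
  by (auto simp: suffix_def occurs_at_def)

lemma occurs_at_drop: "occurs_at r q s \<Longrightarrow> d \<le> q \<Longrightarrow> occurs_at r (q - d) (drop d s)"
  by (auto simp: occurs_at_def)

lemma occurs_at_drop_shift: "occurs_at r q (drop d s) \<Longrightarrow> r \<noteq> [] \<Longrightarrow> occurs_at r (q + d) s"
  unfolding occurs_at_nth by (cases r) (auto simp: add.assoc add.left_commute)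

lemma occurs_at_trans: "occurs_at r p v \<Longrightarrow> occurs_at v q T \<Longrightarrow> occurs_at r (q + p) T"
  unfolding occurs_at_nth by (auto simp: add.assoc)

lemma occurs_at_within:
  assumes "occurs_at r' q' T" and "q' \<le> q" and "q + length r \<le> q' + length r'" and "occurs_at r q T"
  shows "occurs_at r (q - q') r'"
  unfolding occurs_at_nth
proof (intro conjI allI impI)
  show "q - q' + length r \<le> length r'" using assms(2,3) by linarith
  fix i assume i: "i < length r"
  then have "q - q' + i < length r'" using assms(2,3) by linarith
  then have "r' ! (q - q' + i) = T ! (q' + (q - q' + i))" using assms(1) by (simp add: occurs_at_nth)
  also have "q' + (q - q' + i) = q + i" using assms(2) by simp
  also have "T ! (q + i) = r ! i" using assms(4) i unfolding occurs_at_nth by blast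
  finally show "r' ! (q - q' + i) = r ! i" .
qed

lemma occurs_at_sublist: "occurs_at r q s \<Longrightarrow> sublist r s"
  unfolding occurs_at_def sublist_def by (metis append_take_drop_id)

lemma maximal_at_append: "maximal_at R r q (s @ x) \<Longrightarrow> maximal_at R r q s"
  unfolding maximal_at_def using occurs_at_append by blast

lemma maximal_at_drop:
  assumes max: "maximal_at R r q s" and "d \<le> q"
  shows "maximal_at R r (q - d) (drop d s)"
  unfolding maximal_at_def
proof (intro ballI allI impI)
  fix r' q' assume "r' \<in> R" and "q' \<le> q - d" and "q - d + length r \<le> q' + length r'"
    and occ: "occurs_at r' q' (drop d s)"
  show "length r' \<le> length r"
  proof (cases "r' = []")
    case False
    with occ have "occurs_at r' (q' + d) s" by (rule occurs_at_drop_shift)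
    moreover have "q' + d \<le> q" and "q + length r \<le> q' + d + length r'"
      using \<open>d \<le> q\<close> \<open>q' \<le> q - d\<close> \<open>q - d + length r \<le> q' + length r'\<close> by linarith+
    ultimately show ?thesis using max \<open>r' \<in> R\<close> unfolding maximal_at_def by blast
  qed simp
qed

lemma maximal_at_covering_eq:
  assumes "maximal_at R r q T" and "occurs_at r q T" and "r' \<in> R" and "occurs_at r' q' T"
    and "q' \<le> q" and "q + length r \<le> q' + length r'"
  shows "r' = r \<and> q' = q"
proof -
  have "length r' \<le> length r" using assms unfolding maximal_at_def by blast
  then have "q' = q" and "length r' = length r" using assms(5,6) by linarith+
  moreover have "r = take (length r) (drop q T)" and "r' = take (length r') (drop q' T)"
    using assms(2,4) unfolding occurs_at_def by simp_all
  ultimately show ?thesis by simp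
qed

lemma walk_covers:
  "walk R r0 s r1 \<Longrightarrow> i < length s \<Longrightarrow> \<exists>r\<in>R. \<exists>q\<le>i. i < q + length r \<and> occurs_at r q s"
proof (induction arbitrary: i rule: walk.induct)
  case (walk_single r)
  then show ?case by (intro bexI[of _ r] exI[of _ 0]) (auto simp: occurs_at_def)
next
  case (walk_extend r0 s r1 r2 t)
  show ?case
  proof (cases "i < length s")
    case True
    then show ?thesis using walk_extend occurs_at_append by blast
  next
    case False
    have "suffix r2 (s @ drop t r2)" using walk_ends walk.walk_extend[OF walk_extend.hyps] by blast
    then have "occurs_at r2 (length s - t) (s @ drop t r2)"
      using occurs_at_suffix walk_extend.hyps(5) by fastforce
    then show ?thesis using False walk_extend.hyps(2,5) walk_extend.prems
      by (intro bexI[of _ r2] exI[of _ "length s - t"]) auto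
  qed
qed

section \<open>Cutting walks at maximal read occurrences\<close>

lemma occurs_at_overlap:
  assumes occ1: "occurs_at r1 q1 T" and occ2: "occurs_at r2 q2 T"
    and "q1 \<le> q2" and "q1 + length r1 \<le> q2 + length r2"
  shows "drop (q2 - q1) r1 = take (q1 + length r1 - q2) r2"
proof (rule nth_equalityI)
  show "length (drop (q2 - q1) r1) = length (take (q1 + length r1 - q2) r2)"
    using assms(3,4) by simp
  fix i assume "i < length (drop (q2 - q1) r1)"
  then have i: "q2 - q1 + i < length r1" and "i < q1 + length r1 - q2" and "i < length r2"
    using assms(3,4) by auto
  have "drop (q2 - q1) r1 ! i = r1 ! (q2 - q1 + i)" using i by simp
  also have "\<dots> = T ! (q1 + (q2 - q1 + i))" using occ1 i unfolding occurs_at_nth by simp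
  also have "q1 + (q2 - q1 + i) = q2 + i" using assms(3) by simp
  also have "T ! (q2 + i) = r2 ! i" using occ2 \<open>i < length r2\<close> unfolding occurs_at_nth by blast
  also have "\<dots> = take (q1 + length r1 - q2) r2 ! i" using \<open>i < q1 + length r1 - q2\<close> by simp
  finally show "drop (q2 - q1) r1 ! i = take (q1 + length r1 - q2) r2 ! i" .
qed

lemma take_append_drop_occurs_at:
  assumes "occurs_at r2 q2 T" and "q2 \<le> k" and "k \<le> q2 + length r2"
  shows "take k T @ drop (k - q2) r2 = take (q2 + length r2) T"
proof -
  have "drop (k - q2) r2 = drop (k - q2) (take (length r2) (drop q2 T))"
    using assms(1) unfolding occurs_at_def by simp
  also have "\<dots> = take (length r2 - (k - q2)) (drop (k - q2 + q2) T)" by (simp only: drop_take drop_drop)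
  also have "k - q2 + q2 = k" using assms(2) by simp
  also have "length r2 - (k - q2) = q2 + length r2 - k" using assms(2,3) by simp
  finally have "take k T @ drop (k - q2) r2 = take (k + (q2 + length r2 - k)) T" by (simp only: take_add)
  then show ?thesis using assms(3) by simp
qed

lemma walk_extend_occurs_at:
  assumes walk: "walk R r0 (take (q1 + length r1) T) r1" and "r2 \<in> R"
    and occ1: "occurs_at r1 q1 T" and occ2: "occurs_at r2 q2 T"
    and "q1 \<le> q2" and "q2 < q1 + length r1" and "q1 + length r1 \<le> q2 + length r2"
  shows "walk R r0 (take (q2 + length r2) T) r2"
proof -
  define t where "t = q1 + length r1 - q2"
  have t: "1 \<le> t" "t \<le> length r1" "t \<le> length r2" using assms(5-7) unfolding t_def by auto
  have "length r1 - t = q2 - q1" using assms(5,6) unfolding t_def by simp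
  then have "drop (length r1 - t) r1 = take t r2"
    using occurs_at_overlap[OF occ1 occ2 assms(5,7)] unfolding t_def by simp
  then have "walk R r0 (take (q1 + length r1) T @ drop t r2) r2" by (rule walk_extend[OF walk \<open>r2 \<in> R\<close> t])
  then show ?thesis using take_append_drop_occurs_at[OF occ2, of "q1 + length r1"] assms(5-7) unfolding t_def
    by simp
qed

lemma walk_take_maximal_last:
  assumes walk: "walk R r0 s r'" and "prefix s T" and "r \<in> R"
    and occ: "occurs_at r q T" and max: "maximal_at R r q T"
    and "length s - length r' \<le> q" and "q < length s"
  shows "walk R r0 (take (q + length r) T) r"
proof -
  define a where "a = length s - length r'"
  have "r' \<in> R" and "suffix r' s" using walk_ends[OF walk] by blast+
  then have len: "a + length r' = length s" unfolding a_def using suffix_length_le by fastforce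
  have occ': "occurs_at r' a T"
    using occurs_at_prefix[OF occurs_at_suffix[OF \<open>suffix r' s\<close>] \<open>prefix s T\<close>] unfolding a_def .
  have s: "s = take (a + length r') T" using \<open>prefix s T\<close> len by (metis prefix_def append_eq_conv_conj)
  show ?thesis
  proof (cases "q + length r \<le> length s")
    case True
    then have "r' = r \<and> a = q"
      using maximal_at_covering_eq[OF max occ \<open>r' \<in> R\<close> occ'] assms(6) len unfolding a_def by simp
    then show ?thesis using walk s by simp
  next
    case False
    then show ?thesis using walk_extend_occurs_at[OF walk[unfolded s] \<open>r \<in> R\<close> occ' occ] assms(6,7) len
      unfolding a_def by simp
  qed
qed

(* Maximality refers to the whole string T, of which the string s spelled by the walk is a prefix,
   so that it survives the induction over the walk. *)
lemma walk_take_maximal: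
  "walk R r0 s r1 \<Longrightarrow> prefix s T \<Longrightarrow> r \<in> R \<Longrightarrow> occurs_at r q T \<Longrightarrow> maximal_at R r q T \<Longrightarrow>
   q < length s \<Longrightarrow> walk R r0 (take (q + length r) T) r"
proof (induction rule: walk.induct)
  case (walk_single r0)
  then show ?case using walk_take_maximal_last[OF walk.walk_single] by simp
next
  case (walk_extend r0 s r1 r2 t)
  have walk: "walk R r0 (s @ drop t r2) r2" using walk.walk_extend[OF walk_extend.hyps(1-6)] .
  show ?case
  proof (cases "length (s @ drop t r2) - length r2 \<le> q")
    case True
    then show ?thesis using walk_take_maximal_last[OF walk] walk_extend.prems by blast
  next
    case False
    then have "q < length s" using walk_extend.hyps(5) by auto
    moreover have "prefix s T" using walk_extend.prems(1) prefix_append prefix_order.trans by blast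
    ultimately show ?thesis using walk_extend.IH walk_extend.prems by blast
  qed
qed

lemma walk_drop_maximal_last:
  assumes "suffix r2 s" and "r2 \<in> R" and "r \<in> R" and occ: "occurs_at r q s" and max: "maximal_at R r q s"
    and "length s - length r2 < q + length r"
  shows "walk R r (drop q s) r2"
proof -
  define a where "a = length s - length r2"
  have len: "length s = a + length r2" unfolding a_def using suffix_length_le[OF assms(1)] by simp
  have occ2: "occurs_at r2 a s" using occurs_at_suffix[OF assms(1)] unfolding a_def .
  have "q + length r \<le> a + length r2" using occ len unfolding occurs_at_def by simp
  show ?thesis
  proof (cases "a \<le> q")
    case True
    then have "r2 = r \<and> a = q" using maximal_at_covering_eq[OF max occ \<open>r2 \<in> R\<close> occ2] \<open>q + length r \<le> a + length r2\<close>
      by simp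
    moreover have "drop a s = r2" using occ2 len unfolding occurs_at_def by simp
    ultimately show ?thesis using walk_single \<open>r2 \<in> R\<close> by metis
  next
    case False
    define T where "T = drop q s"
    have "occurs_at r 0 T" and "occurs_at r2 (a - q) T"
      using occurs_at_drop[OF occ, of q] occurs_at_drop[OF occ2, of q] False unfolding T_def by simp_all
    moreover have "walk R r (take (0 + length r) T) r"
      using walk_single[OF \<open>r \<in> R\<close>] \<open>occurs_at r 0 T\<close> by (simp add: occurs_at_def)
    moreover have "a - q < 0 + length r" and "0 + length r \<le> a - q + length r2"
      using assms(6) \<open>q + length r \<le> a + length r2\<close> False unfolding a_def[symmetric] by linarith+
    ultimately have "walk R r (take (a - q + length r2) T) r2"
      using walk_extend_occurs_at[OF _ \<open>r2 \<in> R\<close>] by blast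
    then show ?thesis using len False unfolding T_def by simp
  qed
qed

lemma walk_drop_maximal:
  "walk R r0 s r1 \<Longrightarrow> r \<in> R \<Longrightarrow> occurs_at r q s \<Longrightarrow> maximal_at R r q s \<Longrightarrow> walk R r (drop q s) r1"
proof (induction rule: walk.induct)
  case (walk_single r0)
  have "occurs_at r0 0 r0" by (simp add: occurs_at_def)
  then have "r0 = r \<and> 0 = q"
    using maximal_at_covering_eq[OF walk_single.prems(3,2) walk_single.hyps] walk_single.prems(2)
    unfolding occurs_at_def by simp
  then show ?case using walk.walk_single walk_single.hyps by auto
next
  case (walk_extend r0 s r1 r2 t)
  show ?case
  proof (cases "q + length r \<le> length s")
    case True
    then have "walk R r (drop q s) r1"
      using walk_extend.IH walk_extend.prems occurs_at_appendD maximal_at_append by blast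
    then have "walk R r (drop q s @ drop t r2) r2" using walk.walk_extend walk_extend.hyps(2-6) by blast
    then show ?thesis using True by simp
  next
    case False
    have "suffix r2 (s @ drop t r2)" using walk_ends walk.walk_extend[OF walk_extend.hyps(1-6)] by blast
    moreover have "length (s @ drop t r2) - length r2 < q + length r" using False walk_extend.hyps(5) by auto
    ultimately show ?thesis using walk_drop_maximal_last walk_extend.hyps(2) walk_extend.prems by blast
  qed
qed

section \<open>Cyclic strings and periods\<close>

lemma nat_mod_add_nat_mod:
  assumes "0 < L"
  shows "(n + nat (x mod int L)) mod L = nat ((x + int n) mod int L)"
proof -
  have "int ((n + nat (x mod int L)) mod L) = (int n + x mod int L) mod int L"
    using assms by (simp add: of_nat_mod)
  also have "\<dots> = (x + int n) mod int L" by (simp add: mod_add_right_eq add.commute)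
  finally show ?thesis by (metis nat_int)
qed

lemma nth_rotate_nat_mod:
  assumes "w \<noteq> []"
  shows "rotate n w ! nat (j mod int (length w)) = w ! nat ((j + int n) mod int (length w))"
proof -
  have "nat (j mod int (length w)) < length w" using assms by (simp add: nat_less_iff)
  then show ?thesis using assms by (simp add: nth_rotate nat_mod_add_nat_mod)
qed

lemma cyc_rotate:
  assumes "w \<noteq> []"
  shows "cyc (rotate n w) = cyc w"
proof -
  have "cyc (rotate n w) = {f. \<exists>s. \<forall>i. f i = w ! nat ((i + (s + int n)) mod int (length w))}"
    unfolding cyc_def using nth_rotate_nat_mod[OF assms] by (simp add: add.assoc)
  also have "\<dots> = cyc w"
  proof
    show "cyc w \<subseteq> {f. \<exists>s. \<forall>i. f i = w ! nat ((i + (s + int n)) mod int (length w))}"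
      unfolding cyc_def by (auto intro: exI[of _ "_ - int n"])
  qed (auto simp: cyc_def)
  finally show ?thesis .
qed

lemma take_drop_Suc_rotate1:
  assumes "k + n < length P" and "P ! (k + n) = P ! k"
  shows "take n (drop (Suc k) P) = rotate1 (take n (drop k P))"
proof (cases n)
  case (Suc m)
  have "drop k P = P ! k # drop (Suc k) P" using assms(1) by (simp add: Cons_nth_drop_Suc)
  moreover have "take (Suc m) (drop (Suc k) P) = take m (drop (Suc k) P) @ [P ! k]"
    using assms Suc by (simp add: take_Suc_conv_app_nth)
  ultimately show ?thesis using Suc by simp
qed simp

(* |a| is a period of the first |v| positions of v @ a, so moving the window one step to the right
   rotates it by one. *)
lemma cyc_window:
  assumes per: "suffix v (v @ a)" and "a \<noteq> []" and "k \<le> length v"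
  shows "cyc (take (length a) (drop k (v @ a))) = cyc a"
  using assms(3)
proof (induction "length v - k" arbitrary: k)
  case 0
  then show ?case by simp
next
  case (Suc d)
  obtain a' where a': "v @ a = a' @ v" using per by (auto simp: suffix_def)
  then have "length a' = length a" by (metis add_right_cancel length_append add.commute)
  then have "(v @ a) ! (k + length a) = (v @ a) ! k" using Suc.hyps(2) a'
    by (metis add.commute diff_is_0_eq nat.distinct(1) not_le nth_append nth_append_length_plus)
  define w where "w = take (length a) (drop k (v @ a))"
  have "w \<noteq> []" unfolding w_def using Suc.prems \<open>a \<noteq> []\<close> by simp
  have "take (length a) (drop (Suc k) (v @ a)) = rotate1 w"
    unfolding w_def using Suc.hyps(2) \<open>(v @ a) ! (k + length a) = (v @ a) ! k\<close>
    by (intro take_drop_Suc_rotate1) auto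
  then have "cyc w = cyc (take (length a) (drop (Suc k) (v @ a)))"
    using cyc_rotate[OF \<open>w \<noteq> []\<close>, of 1] by simp
  also have "\<dots> = cyc a" using Suc.hyps(2) by (intro Suc.hyps(1)) auto
  finally show ?case unfolding w_def .
qed

lemma length_concat_replicate [simp]: "length (concat (replicate M z)) = M * length z"
  by (induction M) auto

lemma nth_concat_replicate:
  "k < M * length z \<Longrightarrow> concat (replicate M z) ! k = z ! (k mod length z)"
proof (induction M arbitrary: k)
  case (Suc M)
  then show ?case
    by (cases "k < length z") (auto simp: nth_append le_mod_geq)
qed simp

lemma sublist_power_if_cyc_eq:
  assumes "y \<noteq> []" and "z \<noteq> []" and "cyc y = cyc z"
  shows "\<exists>M. sublist (concat (replicate N y)) (concat (replicate M z))"
proof -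
  define f where "f = (\<lambda>i::int. y ! nat (i mod int (length y)))"
  have "f \<in> cyc y" unfolding cyc_def f_def by (auto intro: exI[of _ 0])
  then have "f \<in> cyc z" using assms(3) by simp
  then obtain s where s: "\<forall>i. f i = z ! nat ((i + s) mod int (length z))" unfolding cyc_def by blast
  \<comment> \<open>the shift s places the N-th power of y at offset s mod |z| in a long power of z\<close>
  define d where "d = nat (s mod int (length z))"
  define M where "M = N * length y + 1"
  have "d < length z" unfolding d_def using assms(2) by (simp add: nat_less_iff)
  moreover have "N * length y \<le> N * length y * length z" using assms(2) by (cases z) auto
  moreover have "M * length z = length z + N * length y * length z" unfolding M_def by simp
  ultimately have len: "d + N * length y \<le> M * length z" by linarith
  have "concat (replicate N y) = take (N * length y) (drop d (concat (replicate M z)))"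
  proof (rule nth_equalityI)
    fix i assume "i < length (concat (replicate N y))"
    then have i: "i < N * length y" by simp
    have "take (N * length y) (drop d (concat (replicate M z))) ! i = z ! ((d + i) mod length z)"
      using i len by (simp add: nth_concat_replicate)
    also have "(d + i) mod length z = nat ((int i + s) mod int (length z))"
      unfolding d_def using nat_mod_add_nat_mod[of "length z" i s] assms(2) by (simp add: add.commute)
    also have "z ! nat ((int i + s) mod int (length z)) = f (int i)" using s by simp
    also have "\<dots> = concat (replicate N y) ! i"
      unfolding f_def using i by (simp add: nth_concat_replicate nat_mod_as_int)
    finally show "concat (replicate N y) ! i = take (N * length y) (drop d (concat (replicate M z))) ! i" ..
  qed (use len in simp)
  then show ?thesis unfolding sublist_def by (metis append_take_drop_id)
qed

lemma suffix_self_append_append: "suffix v (v @ a) \<Longrightarrow> suffix v (v @ b) \<Longrightarrow> suffix v (v @ a @ b)"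
  unfolding suffix_def by (metis append_assoc)

lemma suffix_self_append_power: "suffix v (v @ y) \<Longrightarrow> suffix v (v @ concat (replicate n y))"
  by (induction n) (auto intro: suffix_self_append_append)

lemma suffix_power:
  assumes "suffix v (v @ y)" and "y \<noteq> []"
  shows "suffix v (concat (replicate (length v) y))"
proof -
  let ?x = "concat (replicate (length v) y)"
  obtain x' where x': "v @ ?x = x' @ v" using suffix_self_append_power[OF assms(1)] by (auto simp: suffix_def)
  have "length v \<le> length ?x" using assms(2) by (cases y) auto
  moreover have "length x' = length ?x" using arg_cong[OF x', of length] by simp
  ultimately have "drop (length v) (x' @ v) = drop (length v) x' @ v" by simp
  moreover have "?x = drop (length v) (x' @ v)" by (simp flip: x')
  ultimately show ?thesis by (metis suffix_def)
qed

lemma sublist_self_append_power: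
  assumes "suffix v (v @ y)" and "y \<noteq> []" and "y = p @ c @ q" and "suffix v (v @ p)"
  shows "sublist (v @ c) (concat (replicate (Suc (length v)) y))"
proof -
  obtain w where w: "concat (replicate (length v) y) = w @ v"
    using suffix_power[OF assms(1,2)] by (auto simp: suffix_def)
  obtain p' where p': "v @ p = p' @ v" using assms(4) by (auto simp: suffix_def)
  have "concat (replicate (Suc (length v)) y) = concat (replicate (length v) y) @ y"
    by (simp add: replicate_append_same[symmetric])
  also have "\<dots> = (w @ p') @ (v @ c) @ q" using w p' assms(3) by (metis append_assoc)
  finally show ?thesis unfolding sublist_def by blast
qed

lemma take_drop_self_append_append:
  assumes "suffix v (v @ a)" and "k \<le> length v"
  shows "take (length a) (drop k (v @ a)) @ take (length b) (drop k (v @ b)) =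
    take (length (a @ b)) (drop k (v @ a @ b))"
proof -
  obtain a' where a': "v @ a = a' @ v" using assms(1) by (auto simp: suffix_def)
  then have "length a' = length a" by (metis add_right_cancel length_append add.commute)
  have "drop (length a) (drop k (v @ a @ b)) = drop (length a + k) ((v @ a) @ b)"
    by (simp only: drop_drop append_assoc)
  also have "\<dots> = drop k (v @ b)" using a' \<open>length a' = length a\<close> by simp
  finally have "drop (length a) (drop k (v @ a @ b)) = drop k (v @ b)" .
  moreover have "take (length a) (drop k (v @ a @ b)) = take (length a) (drop k (v @ a))"
    using assms(2) by (simp add: append_assoc[symmetric] del: append_assoc)
  ultimately show ?thesis unfolding length_append take_add by (simp only:)
qed

section \<open>Anchors\<close>

definition anchor :: "'a list set \<Rightarrow> 'a list \<Rightarrow> 'a list \<Rightarrow> nat \<Rightarrow> bool" where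
  "anchor R v r p \<longleftrightarrow> r \<in> R \<and> occurs_at r p v \<and> (\<forall>T q. occurs_at v q T \<longrightarrow> maximal_at R r (q + p) T)"

lemma walk_anchor_window:
  assumes walk: "walk R r0 (u @ v @ c @ w) r1" and anchor: "anchor R v r p" and "r \<noteq> []"
    and per: "suffix v (v @ c)"
  shows "walk R r (r @ take (length c) (drop (p + length r) (v @ c))) r"
proof -
  \<comment> \<open>v @ c contains copies of v at offsets 0 and |c|; the walk is cut at the anchor in both\<close>
  let ?s = "u @ v @ c @ w"
  have r: "r \<in> R" "occurs_at r p v" and max: "\<And>T q. occurs_at v q T \<Longrightarrow> maximal_at R r (q + p) T"
    using anchor unfolding anchor_def by auto
  have pv: "p + length r \<le> length v" using r(2) unfolding occurs_at_def by simp
  obtain c' where c': "v @ c = c' @ v" using per by (auto simp: suffix_def)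
  then have "length c' = length c" by (metis add_right_cancel length_append add.commute)
  have occ1: "occurs_at v (length u) ?s" by (simp add: occurs_at_def)
  have s: "?s = (u @ c') @ v @ w" using c' by (metis append_assoc)
  have "occurs_at v (length (u @ c')) ((u @ c') @ v @ w)" by (simp add: occurs_at_def)
  then have occ2: "occurs_at v (length u + length c) ?s"
    by (simp only: s length_append \<open>length c' = length c\<close>)
  define s' where "s' = drop (length u + p) ?s"
  have "walk R r s' r1"
    unfolding s'_def using walk_drop_maximal[OF walk r(1) occurs_at_trans[OF r(2) occ1] max[OF occ1]] .
  moreover have "occurs_at r (length c) s'"
    using occurs_at_drop[OF occurs_at_trans[OF r(2) occ2], of "length u + p"] unfolding s'_def by simp
  moreover have "maximal_at R r (length c) s'"
    using maximal_at_drop[OF max[OF occ2], of "length u + p"] unfolding s'_def by simp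
  moreover have "length c < length s'"
    using \<open>occurs_at r (length c) s'\<close> \<open>r \<noteq> []\<close> unfolding occurs_at_def by (cases r) auto
  ultimately have walk': "walk R r (take (length c + length r) s') r"
    using walk_take_maximal[OF _ prefix_order.refl r(1)] by blast
  have "s' = drop p (v @ c) @ w" unfolding s'_def using pv by simp
  then have "take (length c + length r) s' = take (length r + length c) (drop p (v @ c))"
    using pv by (simp add: add.commute)
  moreover have "drop (length r) (drop p (v @ c)) = drop (p + length r) (v @ c)"
    by (simp only: drop_drop add.commute)
  moreover have "take (length r) (drop p (v @ c)) = r" using r(2) pv unfolding occurs_at_def by simp
  ultimately show ?thesis using walk' by (simp only: take_add)
qed

lemma closed_walk_if_CC:
  assumes "cyc y \<in> CC R" and "y \<noteq> []" and "sublist x (concat (replicate N y))"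
  obtains r0 s where "walk R r0 s r0" and "sublist x s"
proof -
  obtain r0 z where "z \<noteq> []" and walk: "walk R r0 (r0 @ z) r0" and "cyc y = cyc z"
    using assms(1) unfolding CC_eq_closed_walks by auto
  then obtain M where "sublist (concat (replicate N y)) (concat (replicate M z))"
    using sublist_power_if_cyc_eq assms(2) by blast
  then have "sublist x (r0 @ concat (replicate M z))"
    using assms(3) by (meson sublist_append_leftI sublist_order.order_trans)
  then show ?thesis using that walk_power[OF walk] by blast
qed

lemma CC_if_anchor_walk:
  assumes "occurs_at r p v" and "suffix v (v @ c)" and "c \<noteq> []"
    and "walk R r (r @ take (length c) (drop (p + length r) (v @ c))) r"
  shows "cyc c \<in> CC R"
proof -
  define x where "x = take (length c) (drop (p + length r) (v @ c))"
  have "p + length r \<le> length v" using assms(1) unfolding occurs_at_def by simp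
  then have "x \<noteq> []" and "cyc c = cyc x"
    using assms(3) cyc_window[OF assms(2,3)] unfolding x_def by simp_all
  then show ?thesis using assms(4) unfolding CC_eq_closed_walks x_def by blast
qed

lemma anchor_walk_if_CC:
  assumes "read_set R" and anchor: "anchor R v r p" and "cyc y \<in> CC R" and "y \<noteq> []"
    and "sublist (v @ c) (concat (replicate N y))" and per: "suffix v (v @ c)"
  shows "walk R r (r @ take (length c) (drop (p + length r) (v @ c))) r"
proof -
  obtain r0 s where walk: "walk R r0 s r0" and "sublist (v @ c) s" using closed_walk_if_CC assms(3-5) .
  then obtain u w where "s = u @ v @ c @ w" unfolding sublist_def by auto
  moreover have "r \<noteq> []" using anchor assms(1) unfolding anchor_def read_set_def by blast
  ultimately show ?thesis using walk_anchor_window[OF _ anchor _ per] walk by simp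
qed

lemma CC_factor_if_anchored:
  assumes "read_set R" and anchor: "anchor R v r p" and "cyc y \<in> CC R" and "suffix v (v @ y)"
    and "y = x @ c @ z" and "suffix v (v @ x)" and per: "suffix v (v @ c)" and "c \<noteq> []"
  shows "cyc c \<in> CC R"
proof -
  have "y \<noteq> []" using assms(5,8) by simp
  have "occurs_at r p v" using anchor unfolding anchor_def by blast
  moreover have "sublist (v @ c) (concat (replicate (Suc (length v)) y))"
    using sublist_self_append_power[OF assms(4) \<open>y \<noteq> []\<close> assms(5,6)] .
  ultimately show ?thesis
    using CC_if_anchor_walk[OF _ per \<open>c \<noteq> []\<close> anchor_walk_if_CC[OF assms(1) anchor assms(3) \<open>y \<noteq> []\<close> _ per]]
    by blast
qed

lemma CC_append_if_anchored:
  assumes "read_set R" and anchor: "anchor R v r p" and per_a: "suffix v (v @ a)" and per_b: "suffix v (v @ b)"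
    and "a \<noteq> []" and "b \<noteq> []" and "cyc a \<in> CC R" and "cyc b \<in> CC R"
  shows "cyc (a @ b) \<in> CC R"
proof -
  have "occurs_at r p v" using anchor unfolding anchor_def by blast
  then have "p + length r \<le> length v" unfolding occurs_at_def by simp
  have "sublist (v @ a) (concat (replicate (Suc (length v)) a))"
    using sublist_self_append_power[OF per_a \<open>a \<noteq> []\<close>, of "[]" a "[]"] by simp
  then have "walk R r (r @ take (length a) (drop (p + length r) (v @ a))) r"
    using anchor_walk_if_CC[OF assms(1) anchor \<open>cyc a \<in> CC R\<close> \<open>a \<noteq> []\<close> _ per_a] by blast
  moreover have "sublist (v @ b) (concat (replicate (Suc (length v)) b))"
    using sublist_self_append_power[OF per_b \<open>b \<noteq> []\<close>, of "[]" b "[]"] by simp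
  then have "walk R r (r @ take (length b) (drop (p + length r) (v @ b))) r"
    using anchor_walk_if_CC[OF assms(1) anchor \<open>cyc b \<in> CC R\<close> \<open>b \<noteq> []\<close> _ per_b] by blast
  ultimately have "walk R r (r @ take (length (a @ b)) (drop (p + length r) (v @ a @ b))) r"
    using walk_append take_drop_self_append_append[OF per_a \<open>p + length r \<le> length v\<close>, of b]
    by (metis append_assoc)
  then show ?thesis
    using CC_if_anchor_walk[OF \<open>occurs_at r p v\<close> suffix_self_append_append[OF per_a per_b]] \<open>a \<noteq> []\<close>
    by simp
qed

lemma conductor_if_anchored:
  assumes "read_set R" and anchored: "\<And>r0 s. walk R r0 s r0 \<Longrightarrow> sublist v s \<Longrightarrow> \<exists>r p. anchor R v r p"
  shows "conductor v (CC R)"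
  unfolding conductor_def
proof (intro allI impI)
  fix a b :: "'a list"
  assume "a \<noteq> []" and "b \<noteq> []" and per_a: "suffix v (v @ a)" and per_b: "suffix v (v @ b)"
  have per_ab: "suffix v (v @ a @ b)" using suffix_self_append_append[OF per_a per_b] .
  have anchor_exists: "\<exists>r p. anchor R v r p"
    if cyc: "cyc y \<in> CC R" and per: "suffix v (v @ y)" and "y \<noteq> []" for y
  proof -
    have "sublist v (concat (replicate (Suc (length v)) y))"
      using sublist_self_append_power[OF per \<open>y \<noteq> []\<close>, of "[]" "[]" y] by simp
    then obtain r0 s where "walk R r0 s r0" and "sublist v s" using closed_walk_if_CC cyc \<open>y \<noteq> []\<close> by blast
    then show ?thesis by (rule anchored)
  qed
  show "cyc (a @ b) \<in> CC R \<longleftrightarrow> cyc a \<in> CC R \<and> cyc b \<in> CC R"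
  proof
    assume ab: "cyc (a @ b) \<in> CC R"
    then obtain r p where anchor: "anchor R v r p" using anchor_exists per_ab \<open>a \<noteq> []\<close> by blast
    show "cyc a \<in> CC R \<and> cyc b \<in> CC R"
      using CC_factor_if_anchored[OF assms(1) anchor ab per_ab _ _ per_a \<open>a \<noteq> []\<close>, of "[]" b]
        CC_factor_if_anchored[OF assms(1) anchor ab per_ab _ per_a per_b \<open>b \<noteq> []\<close>, of "[]"]
      by simp
  next
    assume "cyc a \<in> CC R \<and> cyc b \<in> CC R"
    moreover obtain r p where "anchor R v r p" using anchor_exists calculation per_a \<open>a \<noteq> []\<close> by blast
    ultimately show "cyc (a @ b) \<in> CC R"
      using CC_append_if_anchored[OF assms(1) _ per_a per_b \<open>a \<noteq> []\<close> \<open>b \<noteq> []\<close>] by blast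
  qed
qed

lemma anchor_non_contained:
  assumes "non_contained R r"
  shows "anchor R r r 0"
  unfolding anchor_def
proof (intro conjI allI impI)
  show "r \<in> R" using assms by (simp add: non_contained_def)
  show "occurs_at r 0 r" by (simp add: occurs_at_def)
  fix T q assume occ: "occurs_at r q T"
  show "maximal_at R r (q + 0) T" unfolding maximal_at_def
  proof (intro ballI allI impI)
    fix r' q' assume "r' \<in> R" and "q' \<le> q + 0" and "q + 0 + length r \<le> q' + length r'"
      and "occurs_at r' q' T"
    then have "occurs_at r (q - q') r'" using occurs_at_within[OF _ _ _ occ] by simp
    then have "sublist r r'" by (rule occurs_at_sublist)
    then have "r' = r" using assms \<open>r' \<in> R\<close> unfolding non_contained_def by blast
    then show "length r' \<le> length r" by simp
  qed
qed

lemma occurs_at_inside_if_covers_middle: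
  assumes bound: "\<And>r. r \<in> R \<Longrightarrow> length r \<le> L" and len: "length v = 2 * L" and occ: "occurs_at v q T"
    and "r \<in> R" and "occurs_at r q' T" and "q' \<le> q + L" and "q + L < q' + length r"
  shows "q \<le> q'" and "occurs_at r (q' - q) v"
proof -
  have "length r \<le> L" using bound \<open>r \<in> R\<close> .
  then have "q \<le> q'" and "q' + length r \<le> q + length v" using assms(6,7) len by linarith+
  then show "q \<le> q'" and "occurs_at r (q' - q) v"
    using occurs_at_within[OF occ _ _ \<open>occurs_at r q' T\<close>] by simp_all
qed

lemma anchor_if_longest_covering:
  assumes bound: "\<And>r. r \<in> R \<Longrightarrow> length r \<le> L" and len: "length v = 2 * L"
    and "r \<in> R" and "occurs_at r p v" and "p \<le> L" and "L < p + length r"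
    and longest: "\<And>r' p'. r' \<in> R \<Longrightarrow> occurs_at r' p' v \<Longrightarrow> p' \<le> L \<Longrightarrow> L < p' + length r' \<Longrightarrow>
      length r' \<le> length r"
  shows "anchor R v r p"
  unfolding anchor_def
proof (intro conjI allI impI)
  fix T q assume occ_v: "occurs_at v q T"
  show "maximal_at R r (q + p) T" unfolding maximal_at_def
  proof (intro ballI allI impI)
    fix r' q' assume "r' \<in> R" and "q' \<le> q + p" and "q + p + length r \<le> q' + length r'"
      and "occurs_at r' q' T"
    then have "q' \<le> q + L" and "q + L < q' + length r'" using assms(5,6) by linarith+
    then have "q \<le> q'" and "occurs_at r' (q' - q) v"
      using occurs_at_inside_if_covers_middle[OF bound len occ_v \<open>r' \<in> R\<close> \<open>occurs_at r' q' T\<close>] by blast+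
    then show "length r' \<le> length r"
      using longest \<open>r' \<in> R\<close> \<open>q' \<le> q + L\<close> \<open>q + L < q' + length r'\<close> by simp
  qed
qed (use assms in auto)

lemma anchor_if_length_twice_bound:
  assumes bound: "\<And>r. r \<in> R \<Longrightarrow> length r \<le> L" and "0 < L" and len: "length v = 2 * L"
    and walk: "walk R r0 s r1" and "sublist v s"
  shows "\<exists>r p. anchor R v r p"
proof -
  define covers where "covers rq \<longleftrightarrow> fst rq \<in> R \<and> occurs_at (fst rq) (snd rq) v \<and> snd rq \<le> L \<and>
    L < snd rq + length (fst rq)" for rq :: "'a list \<times> nat"
  obtain u w where "s = u @ v @ w" using \<open>sublist v s\<close> unfolding sublist_def by blast
  then have occ: "occurs_at v (length u) s" and "length u + L < length s"
    using len \<open>0 < L\<close> by (simp_all add: occurs_at_def)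
  then obtain r' q' where "r' \<in> R" and "q' \<le> length u + L" and "length u + L < q' + length r'"
    and "occurs_at r' q' s"
    using walk_covers[OF walk] by blast
  then have "length u \<le> q'" and "occurs_at r' (q' - length u) v"
    using occurs_at_inside_if_covers_middle[OF bound len occ] by blast+
  then have start: "covers (r', q' - length u)"
    unfolding covers_def using \<open>r' \<in> R\<close> \<open>q' \<le> length u + L\<close> \<open>length u + L < q' + length r'\<close>
    by (simp; linarith)
  moreover have "\<forall>rq. covers rq \<longrightarrow> length (fst rq) < L + 1"
    using bound unfolding covers_def by (auto simp: less_Suc_eq_le)
  ultimately obtain rq where "covers rq" and longest: "\<forall>rq'. covers rq' \<longrightarrow> length (fst rq') \<le> length (fst rq)"
    using Lattices_Big.ex_has_greatest_nat[of covers, OF start, of "\<lambda>rq. length (fst rq)"] by blast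
  then have "anchor R v (fst rq) (snd rq)"
    by (intro anchor_if_longest_covering[OF bound len]) (auto simp: covers_def)
  then show ?thesis by blast
qed

theorem theorem7:
  fixes R :: "('a::finite) list set" and L :: nat
  assumes "read_set R" and "R \<noteq> {}" and "L = Max (length ` R)"
  shows "(\<forall>v. length v = 2 * L \<longrightarrow> conductor v (CC R)) \<and>
         (\<forall>r\<in>R. non_contained R r \<longrightarrow> conductor r (CC R))"
proof -
  have bound: "length r \<le> L" if "r \<in> R" for r
    using assms(1,3) that unfolding read_set_def by (simp add: Max_ge)
  obtain r where "r \<in> R" using assms(2) by blast
  then have "0 < L" using bound[OF \<open>r \<in> R\<close>] assms(1) unfolding read_set_def by (cases r) auto
  have "conductor v (CC R)" if "length v = 2 * L" for v
    using conductor_if_anchored[OF assms(1)] anchor_if_length_twice_bound[OF bound \<open>0 < L\<close> that] by blast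
  moreover have "conductor r (CC R)" if "non_contained R r" for r
    using conductor_if_anchored[OF assms(1)] anchor_non_contained[OF that] by blast
  ultimately show ?thesis by blast
qed

end
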